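(* Let $0\le\lambda<1$ and $0<\alpha\le1$, and let $\varphi(z)=\left(\frac{1+z}{1-z}\right)^{\alpha}=1+2\alpha z+2\alpha^2z^2+\cdots$. If $f(z)=z+\sum_{n\ge2}a_nz^n$ belongs to $S_{\Sigma_1}^{\lambda}(\varphi)$, then $$|a_2|\le\frac{2\alpha}{1-\lambda}$$ and $$|a_3|\le\begin{cases}\dfrac{4\alpha^2}{(1-\lambda)^2}, & \alpha\ge\dfrac{1-\lambda}{4},\\[2ex]\dfrac{\alpha}{1-\lambda}, & \alpha<\dfrac{1-\lambda}{4}.\end{cases}$$
   Context: $U=\{z:|z|<1\}$. Subordination $F\prec G$: there is analytic $w:U\to U$, $w(0)=0$, with $F=G\circ w$. $\Sigma_1$ is the class of functions $f(z)=z+\sum_{n\ge2}a_nz^n$ univalent in $U$ whose inverse $g=f^{-1}$ extends to a univalent function on $U$. For $0\le\lambda<1$, $S_{\Sigma_1}^{\lambda}(\varphi)$ is the class of $f\in\Sigma_1$ with $\dfrac{zf'(z)}{(1-\lambda)f(z)+\lambda zf'(z)}\prec\varphi(z)$ and $\dfrac{wg'(w)}{(1-\lambda)g(w)+\lambda wg'(w)}\prec\varphi(w)$, where $g=f^{-1}$. The power $\left(\frac{1+z}{1-z}\right)^{\alpha}$ is the principal branch, equal to $1$ at $z=0$. *)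

theory Defs
  imports "HOL-Analysis.Analysis"
begin

definition unit_disc :: "complex set" where
  "unit_disc = ball 0 1"

definition subordinate :: "(complex \<Rightarrow> complex) \<Rightarrow> (complex \<Rightarrow> complex) \<Rightarrow> bool" where
  "subordinate F G \<longleftrightarrow>
     (\<exists>w. w holomorphic_on unit_disc \<and> w ` unit_disc \<subseteq> unit_disc \<and> w 0 = 0 \<and>
          (\<forall>z\<in>unit_disc. F z = G (w z)))"

definition taylor_coeff :: "(complex \<Rightarrow> complex) \<Rightarrow> nat \<Rightarrow> complex" where
  "taylor_coeff f n = (deriv ^^ n) f 0 / of_nat (fact n)"

definition normalized_univalent :: "(complex \<Rightarrow> complex) \<Rightarrow> bool" where
  "normalized_univalent f \<longleftrightarrow>
     f holomorphic_on unit_disc \<and> inj_on f unit_disc \<and> f 0 = 0 \<and> deriv f 0 = 1"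

definition inverse_extension :: "(complex \<Rightarrow> complex) \<Rightarrow> (complex \<Rightarrow> complex) \<Rightarrow> bool" where
  "inverse_extension f g \<longleftrightarrow>
     g holomorphic_on unit_disc \<and> inj_on g unit_disc \<and>
     (\<forall>z\<in>unit_disc. f z \<in> unit_disc \<longrightarrow> g (f z) = z)"

definition Sigma1 :: "(complex \<Rightarrow> complex) \<Rightarrow> bool" where
  "Sigma1 f \<longleftrightarrow> normalized_univalent f \<and> (\<exists>g. inverse_extension f g)"

text \<open>The quotient z h'(z) / ((1-lambda) h(z) + lambda z h'(z)), with its removable
  singularity at 0 filled in by its limit value 1.\<close>
definition lam_quot :: "real \<Rightarrow> (complex \<Rightarrow> complex) \<Rightarrow> complex \<Rightarrow> complex" where
  "lam_quot lam h z =
     (if z = 0 then 1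
      else z * deriv h z / ((1 - of_real lam) * h z + of_real lam * z * deriv h z))"

definition S_Sigma1 :: "real \<Rightarrow> (complex \<Rightarrow> complex) \<Rightarrow> (complex \<Rightarrow> complex) \<Rightarrow> bool" where
  "S_Sigma1 lam \<Phi> f \<longleftrightarrow>
     Sigma1 f \<and>
     (\<exists>g. inverse_extension f g \<and>
          subordinate (lam_quot lam f) \<Phi> \<and> subordinate (lam_quot lam g) \<Phi>)"

definition phi_alpha :: "real \<Rightarrow> complex \<Rightarrow> complex" where
  "phi_alpha \<alpha> z = ((1 + z) / (1 - z)) powr (of_real \<alpha>)"

end

theory Submission
  imports Defs "HOL-Complex_Analysis.Complex_Analysis"
begin

(*
  Subordination writes the quotient for f as phi o w with a Schwarz function w; clearing the
  denominator and comparing Taylor coefficients gives (1 - lam) a2 = 2 alpha w1 and a relation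
  between a3, a2^2, w1^2 and w2. The inverse g has coefficients -a2 and 2 a2^2 - a3, so the same
  argument gives a Schwarz function v with v1 = -w1, and subtracting the two a3-relations yields
  a3 = a2^2 + alpha / (2 (1 - lam)) (w2 - v2). With |w2| <= 1 - |w1|^2 (Schwarz-Pick at 0),
  |a3| is at most t 4 alpha^2 / (1 - lam)^2 + (1 - t) alpha / (1 - lam) with t = |w1|^2, hence
  at most the larger of the two terms; which one is larger switches at alpha = (1 - lam) / 4.
  Taylor coefficients are handled as derivatives at 0 throughout.
*)

lemma open_unit_disc: "open unit_disc"
  and zero_in_unit_disc: "0 \<in> unit_disc"
  by (auto simp: unit_disc_def)

lemma Re_Cayley_pos:
  assumes "norm z < 1"
  shows "0 < Re ((1 + z) / (1 - z))"
proof -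
  have "(norm z)\<^sup>2 < 1"
    using assms by (simp add: power_less_one_iff)
  then have "(Re z)\<^sup>2 + (Im z)\<^sup>2 < 1"
    by (simp add: cmod_power2)
  moreover have "Re z < 1"
    using assms abs_Re_le_cmod[of z] by linarith
  moreover have "Re ((1 + z) / (1 - z)) = (1 - ((Re z)\<^sup>2 + (Im z)\<^sup>2)) / ((1 - Re z)\<^sup>2 + (Im z)\<^sup>2)"
    by (simp add: Re_divide cmod_power2 power2_eq_square algebra_simps)
  ultimately show ?thesis
    by (simp add: add_pos_nonneg)
qed

lemma phi_alpha_eq_exp_Ln:
  assumes "z \<in> unit_disc"
  shows "phi_alpha a z = exp (of_real a * Ln ((1 + z) / (1 - z)))"
proof -
  have "(1 + z) / (1 - z) \<noteq> 0"
    using Re_Cayley_pos[of z] assms by (auto simp: unit_disc_def)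
  then show ?thesis
    by (simp add: phi_alpha_def powr_def)
qed

lemma phi_alpha_has_field_derivative:
  assumes "z \<in> unit_disc"
  shows "(phi_alpha a has_field_derivative 2 * of_real a / (1 - z\<^sup>2) * phi_alpha a z) (at z)"
proof -
  have z: "norm z < 1"
    using assms by (simp add: unit_disc_def)
  then have nz: "1 - z \<noteq> 0" "1 + z \<noteq> 0"
    by (metis norm_one norm_minus_cancel less_irrefl right_minus_eq add_eq_0_iff)+
  have slit: "(1 + z) / (1 - z) \<notin> \<real>\<^sub>\<le>\<^sub>0"
    using Re_Cayley_pos[OF z] by (auto simp: complex_nonpos_Reals_iff)
  have "((\<lambda>z. exp (of_real a * Ln ((1 + z) / (1 - z)))) has_field_derivative
          exp (of_real a * Ln ((1 + z) / (1 - z))) * (of_real a * (inverse ((1 + z) / (1 - z)) * (2 / (1 - z)\<^sup>2)))) (at z)"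
    using nz slit
    by (auto intro!: derivative_eq_intros simp: field_simps power2_eq_square)
  moreover have e: "inverse ((1 + z) / (1 - z)) * (2 / (1 - z)\<^sup>2) = 2 / (1 - z\<^sup>2)"
  proof -
    have "1 - z\<^sup>2 = (1 - z) * (1 + z)" "(1 - z)\<^sup>2 = (1 - z) * (1 - z)"
      by (simp_all add: algebra_simps power2_eq_square)
    then show ?thesis
      using nz by (simp add: divide_simps)
  qed
  ultimately have "((\<lambda>z. exp (of_real a * Ln ((1 + z) / (1 - z)))) has_field_derivative
          2 * of_real a / (1 - z\<^sup>2) * phi_alpha a z) (at z)"
    unfolding e phi_alpha_eq_exp_Ln[OF assms] by (simp add: algebra_simps)
  then show ?thesis
    by (rule has_field_derivative_transform_within_open[OF _ open_unit_disc assms])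
       (simp add: phi_alpha_eq_exp_Ln)
qed

lemma phi_alpha_holomorphic: "phi_alpha a holomorphic_on unit_disc"
  using phi_alpha_has_field_derivative open_unit_disc
  by (metis at_within_open field_differentiable_def holomorphic_on_def)

lemma phi_alpha_nonzero: "0 \<notin> phi_alpha a ` unit_disc"
  by (auto simp: phi_alpha_eq_exp_Ln)

lemma phi_alpha_0: "phi_alpha a 0 = 1"
  by (simp add: phi_alpha_def)

lemma deriv_phi_alpha_0: "deriv (phi_alpha a) 0 = 2 * of_real a"
  using DERIV_imp_deriv[OF phi_alpha_has_field_derivative[OF zero_in_unit_disc]]
  by (simp add: phi_alpha_0)

lemma deriv2_phi_alpha_0: "(deriv ^^ 2) (phi_alpha a) 0 = 4 * (of_real a)\<^sup>2"
proof -
  have "eventually (\<lambda>z. deriv (phi_alpha a) z = 2 * of_real a / (1 - z\<^sup>2) * phi_alpha a z) (nhds 0)"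
    using eventually_nhds_in_open[OF open_unit_disc zero_in_unit_disc]
    by eventually_elim (rule DERIV_imp_deriv[OF phi_alpha_has_field_derivative])
  then have "(deriv ^^ 2) (phi_alpha a) 0 = deriv (\<lambda>z. 2 * of_real a / (1 - z\<^sup>2) * phi_alpha a z) 0"
    by (simp add: numeral_2_eq_2 deriv_cong_ev)
  also have "\<dots> = 4 * (of_real a)\<^sup>2"
    apply (rule DERIV_imp_deriv)
    apply (rule derivative_eq_intros refl phi_alpha_has_field_derivative[OF zero_in_unit_disc] | simp)+
    apply (simp add: phi_alpha_0 power2_eq_square)
    done
  finally show ?thesis .
qed

lemma holomorphic_on_compose_image:
  assumes "h holomorphic_on T" and "k holomorphic_on S" and "k ` S \<subseteq> T"
  shows "(\<lambda>x. h (k x)) holomorphic_on S"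
  using holomorphic_on_compose_gen[OF assms(2,1,3)] by (simp add: o_def)

lemma deriv_compose_holomorphic:
  assumes h: "h holomorphic_on T" and k: "k holomorphic_on S" and "open S" "open T"
    and "k ` S \<subseteq> T" and "z \<in> S"
  shows "deriv (\<lambda>x. h (k x)) z = deriv h (k z) * deriv k z"
proof (rule deriv_compose_analytic)
  show "h analytic_on {k z}" and "k analytic_on {z}"
    using assms analytic_on_open analytic_on_subset by blast+
qed

lemma higher_deriv2_compose:
  assumes h: "h holomorphic_on T" and k: "k holomorphic_on S" and S: "open S" and T: "open T"
    and kS: "k ` S \<subseteq> T" and z: "z \<in> S"
  shows "(deriv ^^ 2) (\<lambda>x. h (k x)) z =
          (deriv ^^ 2) h (k z) * (deriv k z)\<^sup>2 + deriv h (k z) * (deriv ^^ 2) k z"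
proof -
  have dh: "deriv h holomorphic_on T" using h T by (rule holomorphic_deriv)
  have dk: "deriv k holomorphic_on S" using k S by (rule holomorphic_deriv)
  have "(deriv ^^ 2) (\<lambda>x. h (k x)) z = deriv (deriv (\<lambda>x. h (k x))) z"
    by (simp add: numeral_2_eq_2)
  also have "\<dots> = deriv (\<lambda>x. deriv h (k x) * deriv k x) z"
  proof (rule complex_derivative_transform_within_open[OF _ _ S z])
    show "deriv (\<lambda>x. h (k x)) holomorphic_on S"
      by (rule holomorphic_deriv[OF holomorphic_on_compose_image[OF h k kS] S])
    show "(\<lambda>x. deriv h (k x) * deriv k x) holomorphic_on S"
      by (intro holomorphic_intros holomorphic_on_compose_image[OF dh k kS] dk)
  qed (rule deriv_compose_holomorphic[OF h k S T kS])
  also have "\<dots> = deriv (\<lambda>x. deriv h (k x)) z * deriv k z + deriv h (k z) * deriv (deriv k) z"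
  proof -
    have "(\<lambda>x. deriv h (k x)) field_differentiable at z" "deriv k field_differentiable at z"
      using holomorphic_on_compose_image[OF dh k kS] dk S z holomorphic_on_imp_differentiable_at
      by blast+
    from deriv_mult[OF this] show ?thesis by (simp add: algebra_simps)
  qed
  also have "\<dots> = (deriv ^^ 2) h (k z) * (deriv k z)\<^sup>2 + deriv h (k z) * (deriv ^^ 2) k z"
    using deriv_compose_holomorphic[OF dh k S T kS z]
    by (simp add: numeral_2_eq_2 power2_eq_square)
  finally show ?thesis .
qed

lemma higher_deriv3_compose:
  assumes h: "h holomorphic_on T" and k: "k holomorphic_on S" and S: "open S" and T: "open T"
    and kS: "k ` S \<subseteq> T" and z: "z \<in> S"
  shows "(deriv ^^ 3) (\<lambda>x. h (k x)) z =
          (deriv ^^ 3) h (k z) * (deriv k z)^3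
          + 3 * (deriv ^^ 2) h (k z) * deriv k z * (deriv ^^ 2) k z
          + deriv h (k z) * (deriv ^^ 3) k z"
proof -
  have dh: "deriv h holomorphic_on T" using h T by (rule holomorphic_deriv)
  have dk: "deriv k holomorphic_on S" using k S by (rule holomorphic_deriv)
  have "(deriv ^^ 3) (\<lambda>x. h (k x)) z = (deriv ^^ 2) (deriv (\<lambda>x. h (k x))) z"
    by (simp add: numeral_3_eq_3 numeral_2_eq_2 funpow_Suc_right del: funpow.simps)
  also have "\<dots> = (deriv ^^ 2) (\<lambda>x. deriv h (k x) * deriv k x) z"
  proof (rule higher_deriv_transform_within_open[OF _ _ S z])
    show "deriv (\<lambda>x. h (k x)) holomorphic_on S"
      by (rule holomorphic_deriv[OF holomorphic_on_compose_image[OF h k kS] S])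
    show "(\<lambda>x. deriv h (k x) * deriv k x) holomorphic_on S"
      by (intro holomorphic_intros holomorphic_on_compose_image[OF dh k kS] dk)
  qed (rule deriv_compose_holomorphic[OF h k S T kS])
  also have "\<dots> = (\<Sum>i = 0..2. of_nat (2 choose i) * (deriv ^^ i) (\<lambda>x. deriv h (k x)) z
                     * (deriv ^^ (2 - i)) (deriv k) z)"
    by (rule higher_deriv_mult[OF holomorphic_on_compose_image[OF dh k kS] dk S z])
  also have "\<dots> = (deriv ^^ 3) h (k z) * (deriv k z)^3
          + 3 * (deriv ^^ 2) h (k z) * deriv k z * (deriv ^^ 2) k z
          + deriv h (k z) * (deriv ^^ 3) k z"
    using deriv_compose_holomorphic[OF dh k S T kS z] higher_deriv2_compose[OF dh k S T kS z]
    by (simp add: numeral_3_eq_3 numeral_2_eq_2 funpow_Suc_right power2_eq_square power3_eq_cube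
        algebra_simps del: funpow.simps)
  finally show ?thesis .
qed

lemma higher_deriv_times_id_deriv_0:
  assumes h: "h holomorphic_on S" and S: "open S" and "0 \<in> S"
  shows "(deriv ^^ k) (\<lambda>z. z * deriv h z) 0 = of_nat k * (deriv ^^ k) h 0"
proof -
  have "(deriv ^^ k) (\<lambda>z. z * deriv h z) 0 =
     (\<Sum>i = 0..k. of_nat (k choose i) * (deriv ^^ i) (\<lambda>z. z) 0 * (deriv ^^ (k - i)) (deriv h) 0)"
    by (rule higher_deriv_mult[OF _ holomorphic_deriv[OF h S] S \<open>0 \<in> S\<close>])
       (auto intro: holomorphic_intros)
  also have "\<dots> = (\<Sum>i \<in> {0..k}. if i = 1 then of_nat k * (deriv ^^ k) h 0 else 0)"
    by (intro sum.cong refl) (cases k; auto simp flip: funpow_swap1)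
  also have "\<dots> = of_nat k * (deriv ^^ k) h 0"
    by (cases k) (auto simp: sum.delta)
  finally show ?thesis .
qed

lemma Schwarz_Pick_deriv_0:
  assumes h: "h holomorphic_on ball 0 1" and hle: "\<And>z. norm z < 1 \<Longrightarrow> norm (h z) \<le> 1"
  shows "norm (deriv h 0) \<le> 1 - (norm (h 0))\<^sup>2"
proof (cases "h constant_on ball 0 1")
  case True
  then obtain k where "\<And>z. z \<in> ball 0 1 \<Longrightarrow> h z = k"
    by (auto simp: constant_on_def)
  then have "eventually (\<lambda>z. h z = k) (nhds 0)"
    using eventually_nhds_in_open[of "ball 0 1" 0] by (auto elim: eventually_mono)
  then have "deriv h 0 = 0"
    by (simp add: deriv_cong_ev)
  then show ?thesis
    using hle[of 0] by (simp add: power_le_one)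
next
  case False
  define c where "c = h 0"
  have hlt: "norm (h z) < 1" if z: "norm z < 1" for z
  proof (rule ccontr)
    assume "\<not> norm (h z) < 1"
    with hle z have "\<And>y. y \<in> ball 0 1 \<Longrightarrow> norm (h y) \<le> norm (h z)"
      by (simp add: antisym_conv2)
    with False z show False
      using maximum_modulus_principle[OF h _ _ _ order_refl, of z] by simp
  qed
  have c: "norm c < 1"
    by (simp add: c_def hlt)
  have M: "Moebius_function 0 c = (\<lambda>z. (z - c) / (1 - cnj c * z))"
    by (simp add: Moebius_function_simple fun_eq_iff)
  \<comment> \<open>Moving h 0 to 0 by a disc automorphism reduces the claim to the Schwarz lemma.\<close>
  define k where "k = (\<lambda>z. Moebius_function 0 c (h z))"
  have hU: "h ` ball 0 1 \<subseteq> ball 0 1"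
    using hlt by auto
  have k: "k holomorphic_on ball 0 1"
    unfolding k_def
    by (rule holomorphic_on_compose_image[OF Moebius_function_holomorphic[OF c] h hU])
  have k0: "k 0 = 0"
    by (simp add: k_def c_def Moebius_function_eq_zero)
  have "norm (k z) < 1" if "norm z < 1" for z
    using Moebius_function_norm_lt_1[OF c hlt[OF that]] by (simp add: k_def)
  then have nk: "norm (deriv k 0) \<le> 1"
    using Schwarz_Lemma(2)[OF k k0, of 0] by simp
  have cc: "1 - cnj c * c = of_real (1 - (norm c)\<^sup>2)"
    by (subst of_real_diff, subst complex_norm_square) (simp add: mult.commute)
  have pos: "0 < 1 - (norm c)\<^sup>2"
    using c by (simp add: power_less_one_iff)
  then have "1 - cnj c * c \<noteq> 0"
    unfolding cc of_real_eq_0_iff by linarith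
  then have "deriv (Moebius_function 0 c) c = 1 / (1 - cnj c * c)"
    unfolding M
    by (intro DERIV_imp_deriv) (auto intro!: derivative_eq_intros simp: nonzero_divide_mult_cancel_left)
  then have "deriv k 0 = deriv h 0 / of_real (1 - (norm c)\<^sup>2)"
    using deriv_compose_holomorphic[OF Moebius_function_holomorphic[OF c] h _ _ hU, of 0]
    by (simp add: k_def c_def[symmetric] cc)
  then have "norm (deriv k 0) = norm (deriv h 0) / (1 - (norm c)\<^sup>2)"
    using pos by (simp only: norm_divide norm_of_real abs_of_pos)
  then have "norm (deriv h 0) / (1 - (norm c)\<^sup>2) \<le> 1"
    using nk by simp
  then show ?thesis
    using pos by (simp add: c_def divide_le_eq)
qed

lemma Schwarz_deriv2_bound:
  assumes w: "w holomorphic_on ball 0 1" and w0: "w 0 = 0"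
    and wlt: "\<And>z. norm z < 1 \<Longrightarrow> norm (w z) < 1"
  shows "norm ((deriv ^^ 2) w 0) \<le> 2 * (1 - (norm (deriv w 0))\<^sup>2)"
proof -
  obtain h where h: "h holomorphic_on ball 0 1" and wz: "\<And>z. norm z < 1 \<Longrightarrow> w z = z * h z"
    and dw: "deriv w 0 = h 0"
    using Schwarz3[OF w w0] by blast
  have hle: "norm (h z) \<le> 1" if z: "norm z < 1" for z
  proof (cases "z = 0")
    case True
    then show ?thesis using Schwarz_Lemma(2)[OF w w0 wlt, of 0] dw by simp
  next
    case False
    have "norm z * norm (h z) \<le> norm z * 1"
      using Schwarz_Lemma(1)[OF w w0 wlt z] wz[OF z] by (simp add: norm_mult)
    then show ?thesis using False by simp
  qed
  have "(deriv ^^ 2) w 0 = (deriv ^^ 2) (\<lambda>z. z * h z) 0"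
    by (rule higher_deriv_transform_within_open[OF w])
       (use h wz in \<open>auto intro: holomorphic_intros\<close>)
  also have "\<dots> = (\<Sum>i = 0..2. of_nat (2 choose i) * (deriv ^^ i) (\<lambda>z. z) 0 * (deriv ^^ (2 - i)) h 0)"
    by (rule higher_deriv_mult) (use h in \<open>auto intro: holomorphic_intros\<close>)
  also have "\<dots> = 2 * deriv h 0"
    by (simp add: numeral_2_eq_2)
  finally show ?thesis
    using Schwarz_Pick_deriv_0[OF h hle] dw by (simp add: norm_mult)
qed

lemma lam_quot_coeff_relations:
  fixes L :: complex
  assumes h: "h holomorphic_on S" and p: "p holomorphic_on S" and S: "open S" "0 \<in> S"
    and h0: "h 0 = 0" and dh0: "deriv h 0 = 1" and p0: "p 0 = 1"
    and ident: "\<And>z. z \<in> S \<Longrightarrow> p z * ((1 - L) * h z + L * (z * deriv h z)) = z * deriv h z"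
  shows "(1 - L) * (deriv ^^ 2) h 0 = 2 * deriv p 0"
    and "2 * (1 - L) * (deriv ^^ 3) h 0 - 3 * (1 + L) * deriv p 0 * (deriv ^^ 2) h 0
           = 3 * (deriv ^^ 2) p 0"
proof -
  define D where "D z = (1 - L) * h z + L * (z * deriv h z)" for z
  have dh: "deriv h holomorphic_on S"
    by (rule holomorphic_deriv[OF h S(1)])
  have D: "D holomorphic_on S"
    unfolding D_def by (intro holomorphic_intros h dh)
  have zdh: "(deriv ^^ k) (\<lambda>z. z * deriv h z) 0 = of_nat k * (deriv ^^ k) h 0" for k
    by (rule higher_deriv_times_id_deriv_0[OF h S])
  have Dk: "(deriv ^^ k) D 0 = (1 + (of_nat k - 1) * L) * (deriv ^^ k) h 0" for k
  proof -
    have "(deriv ^^ k) D 0 = (deriv ^^ k) (\<lambda>z. (1 - L) * h z) 0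
                             + (deriv ^^ k) (\<lambda>z. L * (z * deriv h z)) 0"
      unfolding D_def by (rule higher_deriv_add[OF _ _ S]) (auto intro!: holomorphic_intros h dh)
    also have "\<dots> = (1 - L) * (deriv ^^ k) h 0 + L * (of_nat k * (deriv ^^ k) h 0)"
      using higher_deriv_cmult[OF h S(2,1)] higher_deriv_cmult[OF _ S(2,1), of "\<lambda>z. z * deriv h z"]
      by (simp add: holomorphic_intros dh zdh)
    finally show ?thesis
      by (simp add: algebra_simps)
  qed
  have "(deriv ^^ n) (\<lambda>z. p z * D z) 0 = (deriv ^^ n) (\<lambda>z. z * deriv h z) 0" for n
    by (rule higher_deriv_transform_within_open[OF _ _ S])
       (auto intro!: holomorphic_intros h p dh ident simp: D_def)
  then have Leibniz: "(\<Sum>i = 0..n. of_nat (n choose i) * (deriv ^^ i) p 0 * (deriv ^^ (n - i)) D 0)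
                        = of_nat n * (deriv ^^ n) h 0" for n
    by (simp add: higher_deriv_mult[OF p D S] zdh)
  have D0: "D 0 = 0"
    by (simp add: D_def h0)
  show "(1 - L) * (deriv ^^ 2) h 0 = 2 * deriv p 0"
    using Leibniz[of 2] D0 Dk[of 1] Dk[of 2] p0 dh0
    by (simp add: numeral_2_eq_2 algebra_simps)
  show "2 * (1 - L) * (deriv ^^ 3) h 0 - 3 * (1 + L) * deriv p 0 * (deriv ^^ 2) h 0
          = 3 * (deriv ^^ 2) p 0"
    using Leibniz[of 3] D0 Dk[of 1] Dk[of 2] Dk[of 3] p0 dh0
    by (simp add: numeral_3_eq_3 numeral_2_eq_2 algebra_simps)
qed

lemma subordinate_lam_quot_coeffs:
  fixes lam :: real
  assumes h: "h holomorphic_on unit_disc" and h0: "h 0 = 0" and dh0: "deriv h 0 = 1"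
    and \<Phi>: "\<Phi> holomorphic_on unit_disc" and \<Phi>_nz: "0 \<notin> \<Phi> ` unit_disc"
    and \<Phi>0: "\<Phi> 0 = 1"
    and sub: "subordinate (lam_quot lam h) \<Phi>"
  obtains u1 U2 where "norm U2 \<le> 2 * (1 - (norm u1)\<^sup>2)"
    "(1 - of_real lam) * (deriv ^^ 2) h 0 = 2 * (deriv \<Phi> 0 * u1)"
    "2 * (1 - of_real lam) * (deriv ^^ 3) h 0
       - 3 * (1 + of_real lam) * (deriv \<Phi> 0 * u1) * (deriv ^^ 2) h 0
     = 3 * ((deriv ^^ 2) \<Phi> 0 * u1\<^sup>2 + deriv \<Phi> 0 * U2)"
proof -
  from sub obtain w where w: "w holomorphic_on unit_disc" and wU: "w ` unit_disc \<subseteq> unit_disc"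
    and w0: "w 0 = 0" and quot: "\<And>z. z \<in> unit_disc \<Longrightarrow> lam_quot lam h z = \<Phi> (w z)"
    by (auto simp: subordinate_def)
  define L where "L = (of_real lam :: complex)"
  define p where "p = (\<lambda>z. \<Phi> (w z))"
  have p: "p holomorphic_on unit_disc"
    unfolding p_def by (rule holomorphic_on_compose_image[OF \<Phi> w wU])
  have ident: "p z * ((1 - L) * h z + L * (z * deriv h z)) = z * deriv h z"
    if z: "z \<in> unit_disc" for z
  proof (cases "z = 0")
    case True
    then show ?thesis by (simp add: h0)
  next
    case False
    define D where "D = (1 - L) * h z + L * (z * deriv h z)"
    have "lam_quot lam h z = z * deriv h z / D"
      using False by (simp add: lam_quot_def D_def L_def algebra_simps)
    moreover have "p z \<noteq> 0"
      using \<Phi>_nz wU z by (force simp: p_def)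
    \<comment> \<open>If D = 0 the quotient is 0 by the convention x / 0 = 0, contradicting p z \<noteq> 0.\<close>
    ultimately show ?thesis
      using quot[OF z] by (cases "D = 0") (auto simp: p_def D_def field_simps)
  qed
  have "(1 - L) * (deriv ^^ 2) h 0 = 2 * deriv p 0"
    and "2 * (1 - L) * (deriv ^^ 3) h 0 - 3 * (1 + L) * deriv p 0 * (deriv ^^ 2) h 0
           = 3 * (deriv ^^ 2) p 0"
    using lam_quot_coeff_relations[OF h p open_unit_disc zero_in_unit_disc h0 dh0 _ ident]
    by (simp_all add: p_def w0 \<Phi>0)
  moreover have "deriv p 0 = deriv \<Phi> 0 * deriv w 0"
    using deriv_compose_holomorphic[OF \<Phi> w open_unit_disc open_unit_disc wU zero_in_unit_disc]
    by (simp add: p_def w0)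
  moreover have "(deriv ^^ 2) p 0 = (deriv ^^ 2) \<Phi> 0 * (deriv w 0)\<^sup>2 + deriv \<Phi> 0 * (deriv ^^ 2) w 0"
    using higher_deriv2_compose[OF \<Phi> w open_unit_disc open_unit_disc wU zero_in_unit_disc]
    by (simp add: p_def w0)
  moreover have "norm ((deriv ^^ 2) w 0) \<le> 2 * (1 - (norm (deriv w 0))\<^sup>2)"
    by (rule Schwarz_deriv2_bound) (use w wU w0 in \<open>force simp: unit_disc_def\<close>)+
  ultimately show ?thesis
    using that[of "(deriv ^^ 2) w 0" "deriv w 0"] by (simp add: L_def)
qed

lemma inverse_extension_higher_derivs:
  assumes f: "f holomorphic_on unit_disc" and f0: "f 0 = 0" and df0: "deriv f 0 = 1"
    and "inverse_extension f g"
  shows "g holomorphic_on unit_disc" "g 0 = 0" "deriv g 0 = 1"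
    "(deriv ^^ 2) g 0 = - (deriv ^^ 2) f 0"
    "(deriv ^^ 3) g 0 = 3 * ((deriv ^^ 2) f 0)\<^sup>2 - (deriv ^^ 3) f 0"
proof -
  have g: "g holomorphic_on unit_disc"
    and gf: "\<And>z. z \<in> unit_disc \<Longrightarrow> f z \<in> unit_disc \<Longrightarrow> g (f z) = z"
    using assms(4) by (auto simp: inverse_extension_def)
  show "g holomorphic_on unit_disc"
    by (rule g)
  define S where "S = unit_disc \<inter> f -` unit_disc"
  have S: "open S" and S0: "0 \<in> S"
    using continuous_open_preimage[OF holomorphic_on_imp_continuous_on[OF f] open_unit_disc open_unit_disc]
      zero_in_unit_disc f0
    by (simp_all add: S_def)
  have fS: "f holomorphic_on S" and fSU: "f ` S \<subseteq> unit_disc"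
    using f by (auto simp: S_def elim: holomorphic_on_subset)
  note chain = deriv_compose_holomorphic higher_deriv2_compose higher_deriv3_compose
  note chain_at_0 = chain[OF g fS S open_unit_disc fSU S0, unfolded f0 df0]
  show g0: "g 0 = 0"
    using gf[of 0] zero_in_unit_disc f0 by simp
  have id: "(deriv ^^ n) (\<lambda>x. g (f x)) 0 = (deriv ^^ n) (\<lambda>x. x) 0" for n
    by (rule higher_deriv_transform_within_open[OF holomorphic_on_compose_image[OF g fS fSU] _ S S0])
       (auto intro: holomorphic_intros gf simp: S_def)
  show dg0: "deriv g 0 = 1"
    using chain_at_0(1) id[of 1] by simp
  then show g2: "(deriv ^^ 2) g 0 = - (deriv ^^ 2) f 0"
    using chain_at_0(2) id[of 2] by (simp add: eq_neg_iff_add_eq_0)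
  have "(deriv ^^ 3) g 0 + 3 * (deriv ^^ 2) g 0 * (deriv ^^ 2) f 0 + (deriv ^^ 3) f 0 = 0"
    using chain_at_0(3) id[of 3] dg0 by simp
  then show "(deriv ^^ 3) g 0 = 3 * ((deriv ^^ 2) f 0)\<^sup>2 - (deriv ^^ 3) f 0"
    unfolding g2 by (simp add: algebra_simps power2_eq_square eq_diff_eq add_eq_0_iff2)
qed

text \<open>F2, F3 play the role of the second and third derivatives of f at 0, and u1, U2 and v1, V2
  the first and second derivatives at 0 of the Schwarz functions of f and of its inverse.\<close>

lemma bi_subordinate_coefficient_bounds:
  fixes lam a :: real and F2 F3 u1 U2 v1 V2 :: complex
  assumes lam: "lam < 1" and a: "0 < a"
    and U2: "norm U2 \<le> 2 * (1 - (norm u1)\<^sup>2)" and V2: "norm V2 \<le> 2 * (1 - (norm v1)\<^sup>2)"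
    and f2: "(1 - of_real lam) * F2 = 2 * (2 * of_real a * u1)"
    and f3: "2 * (1 - of_real lam) * F3 - 3 * (1 + of_real lam) * (2 * of_real a * u1) * F2
               = 3 * (4 * (of_real a)\<^sup>2 * u1\<^sup>2 + 2 * of_real a * U2)"
    and g2: "(1 - of_real lam) * - F2 = 2 * (2 * of_real a * v1)"
    and g3: "2 * (1 - of_real lam) * (3 * F2\<^sup>2 - F3) - 3 * (1 + of_real lam) * (2 * of_real a * v1) * - F2
               = 3 * (4 * (of_real a)\<^sup>2 * v1\<^sup>2 + 2 * of_real a * V2)"
  shows "norm (F2 / 2) \<le> 2 * a / (1 - lam) \<and>
         (if a \<ge> (1 - lam) / 4
          then norm (F3 / 6) \<le> 4 * a\<^sup>2 / (1 - lam)\<^sup>2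
          else norm (F3 / 6) \<le> a / (1 - lam))"
proof -
  define c where "c = 1 - lam"
  have c: "0 < c"
    using lam by (simp add: c_def)
  have cc: "1 - of_real lam = (of_real c :: complex)"
    by (simp add: c_def)
  have "2 * (2 * of_real a * v1) = 2 * (2 * of_real a * - u1)"
    using g2 unfolding mult_minus_right f2 by (rule sym)
  then have v1: "v1 = - u1"
    using a by (metis mult_cancel_left mult_eq_0_iff of_real_eq_0_iff zero_neq_numeral less_irrefl)
  have a2: "F2 / 2 = of_real (2 * a / c) * u1"
    using f2 c unfolding cc by (simp add: field_simps)
  have "2 * of_real c * (2 * F3 - 3 * F2\<^sup>2) = 6 * of_real a * (U2 - V2)"
    using f3 g3 unfolding cc v1 by algebra
  then have a3: "F3 / 6 = (F2 / 2)\<^sup>2 + of_real (a / (4 * c)) * (U2 - V2)"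
    using c by (simp add: field_simps power2_eq_square)
  define t where "t = (norm u1)\<^sup>2"
  have t0: "0 \<le> t"
    by (simp add: t_def)
  have "0 \<le> 2 * (1 - t)"
    unfolding t_def using norm_ge_zero U2 by (rule order_trans)
  then have t1: "t \<le> 1"
    by simp
  have n2: "norm (F2 / 2) = 2 * a / c * norm u1"
    unfolding a2 norm_mult norm_of_real using a c by simp
  have "norm u1 \<le> 1"
    using t1 by (simp add: t_def power_le_one_iff)
  then have "norm (F2 / 2) \<le> 2 * a / c"
    unfolding n2 by (rule mult_left_le) (use a c in auto)
  have "norm ((F2 / 2)\<^sup>2) = t * (4 * a\<^sup>2 / c\<^sup>2)"
    unfolding norm_power n2 t_def by (simp add: power_mult_distrib power_divide)
  moreover have "norm (of_real (a / (4 * c)) * (U2 - V2)) \<le> (1 - t) * (a / c)"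
  proof -
    have "norm (of_real (a / (4 * c)) * (U2 - V2)) = a / (4 * c) * norm (U2 - V2)"
      unfolding norm_mult norm_of_real using a c by simp
    also have "\<dots> \<le> a / (4 * c) * (4 * (1 - t))"
      using norm_triangle_ineq4[of U2 V2] U2 V2 v1 a c
      by (intro mult_left_mono) (auto simp: t_def)
    also have "\<dots> = (1 - t) * (a / c)"
      using c by (simp add: field_simps)
    finally show ?thesis .
  qed
  ultimately have "norm (F3 / 6) \<le> t * (4 * a\<^sup>2 / c\<^sup>2) + (1 - t) * (a / c)"
    using norm_triangle_ineq[of "(F2 / 2)\<^sup>2" "of_real (a / (4 * c)) * (U2 - V2)"]
    by (simp add: a3)
  also have "\<dots> \<le> max (4 * a\<^sup>2 / c\<^sup>2) (a / c)"
    using t0 t1 by (intro convex_bound_le) auto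
  finally have "norm (F3 / 6) \<le> max (4 * a\<^sup>2 / c\<^sup>2) (a / c)" .
  moreover have "a / c \<le> 4 * a\<^sup>2 / c\<^sup>2 \<longleftrightarrow> c / 4 \<le> a"
    using a c by (simp add: field_simps power2_eq_square)
  ultimately show ?thesis
    using \<open>norm (F2 / 2) \<le> 2 * a / c\<close> by (auto simp: c_def max_def)
qed

theorem corollary7:
  fixes lam \<alpha> :: real and f :: "complex \<Rightarrow> complex"
  assumes "0 \<le> lam" and "lam < 1" and "0 < \<alpha>" and "\<alpha> \<le> 1"
    and "S_Sigma1 lam (phi_alpha \<alpha>) f"
  shows "norm (taylor_coeff f 2) \<le> 2 * \<alpha> / (1 - lam) \<and>
         (if \<alpha> \<ge> (1 - lam) / 4
          then norm (taylor_coeff f 3) \<le> 4 * \<alpha>\<^sup>2 / (1 - lam)\<^sup>2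
          else norm (taylor_coeff f 3) \<le> \<alpha> / (1 - lam))"
proof -
  from assms(5) obtain g where nf: "normalized_univalent f" and ie: "inverse_extension f g"
    and sf: "subordinate (lam_quot lam f) (phi_alpha \<alpha>)"
    and sg: "subordinate (lam_quot lam g) (phi_alpha \<alpha>)"
    by (auto simp: S_Sigma1_def Sigma1_def)
  then have f: "f holomorphic_on unit_disc" "f 0 = 0" "deriv f 0 = 1"
    by (auto simp: normalized_univalent_def)
  note g = inverse_extension_higher_derivs[OF f ie]
  note coeffs = subordinate_lam_quot_coeffs[where \<Phi> = "phi_alpha \<alpha>",
      OF _ _ _ phi_alpha_holomorphic phi_alpha_nonzero phi_alpha_0,
      unfolded deriv_phi_alpha_0 deriv2_phi_alpha_0]
  have coeff: "taylor_coeff f 2 = (deriv ^^ 2) f 0 / 2" "taylor_coeff f 3 = (deriv ^^ 3) f 0 / 6"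
    by (simp_all add: taylor_coeff_def fact_numeral)
  show ?thesis
    unfolding coeff
    by (rule coeffs[OF f sf], rule coeffs[OF g(1-3) sg, unfolded g(4,5)],
        rule bi_subordinate_coefficient_bounds[OF assms(2,3)])
qed

end
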